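(* Let $n,k\in\mathbb{N}$ with $n\ge 2k$. A function $f\colon\binom{[n]}{k}\to\mathbb{R}$ satisfies $W^k(f)=0$ if and only if there exists $h\colon\binom{[n]}{k-1}\to\mathbb{R}$ such that for all $R\in\binom{[n]}{k}$, $f(R)=\sum_{S\subset R,\,|S|=k-1}h(S)$.
   Context: An $s$-permutation of $V$ is a sequence of $s$ distinct elements of $V$. For $k,r\in\mathbb{N}$, a finite set $V$ with $|V|\ge 2k\ge 2r$ and $f\colon\binom{V}{k}\to\mathbb{R}$, the level-$r$ weight of $f$ is \[ W^r(f)=\left(\mathbb{E}_{(a_1,b_1,\ldots,a_r,b_r)}\Big(\mathbb{E}_{R}\,(-1)^{|R\cap\{b_1,\ldots,b_r\}|}f(R)\Big)^2\right)^{1/2}, \] where $(a_1,b_1,\ldots,a_r,b_r)$ is a uniformly random $2r$-permutation of $V$, and, given it, $R$ is a uniformly random $k$-subset of $V$ with $|R\cap\{a_i,b_i\}|=1$ for each $i\in[r]$. Here $V=[n]$ and $r=k$. *)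

theory Defs
  imports Complex_Main
begin

definition perms :: "'a set \<Rightarrow> nat \<Rightarrow> 'a list set" where
  "perms V s = {xs. length xs = s \<and> distinct xs \<and> set xs \<subseteq> V}"

text \<open>For a 2r-permutation xs = (a_1,b_1,...,a_r,b_r) (0-indexed: a_i = xs!(2i), b_i = xs!(2i+1)),
  the k-subsets R of V with |R \<inter> {a_i,b_i}| = 1 for all i.\<close>
definition compat_sets :: "'a set \<Rightarrow> nat \<Rightarrow> nat \<Rightarrow> 'a list \<Rightarrow> 'a set set" where
  "compat_sets V k r xs = {R. R \<subseteq> V \<and> card R = k \<and>
      (\<forall>i<r. card (R \<inter> {xs ! (2*i), xs ! (2*i+1)}) = 1)}"

definition b_set :: "nat \<Rightarrow> 'a list \<Rightarrow> 'a set" where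
  "b_set r xs = {xs ! (2*i+1) | i. i < r}"

definition inner_exp :: "'a set \<Rightarrow> nat \<Rightarrow> nat \<Rightarrow> ('a set \<Rightarrow> real) \<Rightarrow> 'a list \<Rightarrow> real" where
  "inner_exp V k r f xs =
     (\<Sum>R\<in>compat_sets V k r xs. (-1) ^ card (R \<inter> b_set r xs) * f R) / real (card (compat_sets V k r xs))"

definition level_weight :: "'a set \<Rightarrow> nat \<Rightarrow> nat \<Rightarrow> ('a set \<Rightarrow> real) \<Rightarrow> real" where
  "level_weight V k r f =
     sqrt ((\<Sum>xs\<in>perms V (2*r). (inner_exp V k r f xs)^2) / real (card (perms V (2*r))))"

end

(*
  W^k(f) = 0 says exactly that every k-dimensional cube difference of f vanishes: the alternating
  sum over the choices of one element from each of k disjoint pairs. A j-dimensional cube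
  difference kills every function on k-sets that agrees with a multilinear polynomial of degree
  < j in the indicator variables x_i. Conversely, if all j-cube differences of f vanish, then f
  has degree < j, by induction on the ground set: for a point v, f(v \<union> -) has degree < j;
  subtracting a lift of it leaves g vanishing on the sets through v, and cubes containing a pair
  (x, v) turn the j-cube conditions for g into (j-1)-cube conditions away from v, whence
  g = (1 - x_v) * (a polynomial of degree < j-1). Finally, on k-sets every polynomial of
  degree < k can be rewritten as a sum over (k-1)-subsets.
*)
theory Submission
  imports Defs
begin

text \<open>\<open>cube_sum f T [a\<^sub>1, b\<^sub>1, \<dots>, a\<^sub>m, b\<^sub>m]\<close> is the sum of
  \<open>(-1)^|{i. c\<^sub>i = b\<^sub>i}| f(T \<union> {c\<^sub>1, \<dots>, c\<^sub>m})\<close> over all choices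
  \<open>c\<^sub>i \<in> {a\<^sub>i, b\<^sub>i}\<close> (see \<open>cube_sum_signed_sum\<close>).\<close>

fun cube_sum :: "('a set \<Rightarrow> real) \<Rightarrow> 'a set \<Rightarrow> 'a list \<Rightarrow> real" where
  "cube_sum f T (a # b # xs) = cube_sum f (insert a T) xs - cube_sum f (insert b T) xs"
| "cube_sum f T xs = f T"

lemma cube_sum_insert_base:
  "cube_sum f (insert v T) xs = cube_sum (\<lambda>X. f (insert v X)) T xs"
  by (induction f T xs rule: cube_sum.induct) (simp_all add: insert_commute)

lemma cube_sum_diff: "cube_sum (\<lambda>X. f X - g X) T xs = cube_sum f T xs - cube_sum g T xs"
  by (induction f T xs rule: cube_sum.induct) simp_all

lemma length_double_SucE:
  assumes "length xs = 2 * Suc m"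
  obtains a b ys where "xs = a # b # ys" "length ys = 2 * m"
  using assms by (cases xs; cases "tl xs") auto

definition pair_transversals :: "'a set \<Rightarrow> nat \<Rightarrow> 'a list \<Rightarrow> 'a set set" where
  "pair_transversals T m xs = {R. T \<subseteq> R \<and> R \<subseteq> T \<union> set xs \<and>
     (\<forall>i<m. card (R \<inter> {xs ! (2*i), xs ! (2*i+1)}) = 1)}"

lemma pair_transversals_0 [simp]: "pair_transversals T 0 [] = {T}"
  by (auto simp: pair_transversals_def)

lemma card_Int_doubleton_eq_1:
  "a \<noteq> b \<Longrightarrow> card (R \<inter> {a, b}) = 1 \<longleftrightarrow> (a \<in> R \<longleftrightarrow> b \<notin> R)"
  by (cases "a \<in> R"; cases "b \<in> R") (auto simp: Int_insert_right)

lemma pair_transversals_Cons: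
  assumes "distinct (a # b # ys)" "T \<inter> set (a # b # ys) = {}"
  shows "pair_transversals T (Suc m) (a # b # ys) =
           pair_transversals (insert a T) m ys \<union> pair_transversals (insert b T) m ys"
proof -
  have all_less_Suc: "(\<forall>i<Suc m. P i) \<longleftrightarrow> P 0 \<and> (\<forall>i<m. P (Suc i))" for P
    by (auto simp: less_Suc_eq_0_disj)
  have rest: "(\<forall>i<Suc m. card (R \<inter> {(a#b#ys) ! (2*i), (a#b#ys) ! (2*i+1)}) = 1) \<longleftrightarrow>
      (a \<in> R \<longleftrightarrow> b \<notin> R) \<and> (\<forall>i<m. card (R \<inter> {ys ! (2*i), ys ! (2*i+1)}) = 1)" for R
    using assms(1) all_less_Suc card_Int_doubleton_eq_1[of a b R] by simp
  have ends: "(T \<subseteq> R \<and> R \<subseteq> T \<union> set (a # b # ys) \<and> (a \<in> R \<longleftrightarrow> b \<notin> R) \<and> P) \<longleftrightarrow>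
      (insert a T \<subseteq> R \<and> R \<subseteq> insert a T \<union> set ys \<and> P) \<or>
      (insert b T \<subseteq> R \<and> R \<subseteq> insert b T \<union> set ys \<and> P)" for R P
    using assms by (cases "a \<in> R") (auto simp: subset_iff)
  show ?thesis
    unfolding pair_transversals_def set_eq_iff Un_iff mem_Collect_eq rest ends by (intro allI refl)
qed

lemma card_pair_transversal:
  assumes "distinct xs" "length xs = 2 * m" "finite T" "T \<inter> set xs = {}"
    and "R \<in> pair_transversals T m xs"
  shows "card R = card T + m"
  using assms
proof (induction m arbitrary: xs T)
  case 0
  then show ?case by simp
next
  case (Suc m)
  then obtain a b ys where xs: "xs = a # b # ys" "length ys = 2 * m"
    by (blast elim: length_double_SucE)
  have ys: "distinct ys" "set ys \<inter> {a, b} = {}"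
    using Suc.prems(1) xs(1) by auto
  have "card R = card T + Suc m"
    if "R \<in> pair_transversals (insert c T) m ys" "c \<in> {a, b}" for c
  proof -
    have "c \<notin> T" "insert c T \<inter> set ys = {}"
      using Suc.prems(4) ys(2) xs(1) that(2) by auto
    then show ?thesis
      using Suc.IH[OF ys(1) xs(2) _ _ that(1)] Suc.prems(3) by simp
  qed
  moreover have "R \<in> pair_transversals (insert a T) m ys \<union> pair_transversals (insert b T) m ys"
    using Suc.prems(5) pair_transversals_Cons[of a b ys T m] Suc.prems(1,4) unfolding xs(1) by simp
  ultimately show ?case by blast
qed

lemma b_set_Cons: "b_set (Suc m) (a # b # ys) = insert b (b_set m ys)"
  by (simp add: b_set_def setcompr_eq_image lessThan_def[symmetric] lessThan_Suc_eq_insert_0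
      image_image del: lessThan_iff)

lemma b_set_subset: "length xs = 2 * m \<Longrightarrow> b_set m xs \<subseteq> set xs"
  by (auto simp: b_set_def)

lemma finite_pair_transversals: "finite T \<Longrightarrow> finite (pair_transversals T m xs)"
  unfolding pair_transversals_def by (rule finite_subset[of _ "Pow (T \<union> set xs)"]) auto

lemma cube_sum_signed_sum:
  assumes "distinct xs" "length xs = 2 * m" "finite T" "T \<inter> set xs = {}"
  shows "cube_sum f T xs = (\<Sum>R\<in>pair_transversals T m xs. (-1) ^ card (R \<inter> b_set m xs) * f R)"
  using assms
proof (induction m arbitrary: xs T)
  case 0
  then show ?case by (simp add: b_set_def)
next
  case (Suc m)
  then obtain a b ys where xs: "xs = a # b # ys" "length ys = 2 * m"
    by (blast elim: length_double_SucE)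
  have ys: "distinct ys" "a \<noteq> b" "a \<notin> T" "b \<notin> T" "a \<notin> set ys" "b \<notin> set ys" "T \<inter> set ys = {}"
    using Suc.prems xs(1) by auto
  define \<sigma> where "\<sigma> R = (-1) ^ card (R \<inter> b_set m ys) * f R" for R
  have b_notin: "b \<notin> b_set m ys"
    using b_set_subset[OF xs(2)] ys(6) by blast
  have fin: "finite (R \<inter> b_set m ys)" for R
    using xs(2) by (simp add: b_set_def)
  have IH: "cube_sum f (insert c T) ys = sum \<sigma> (pair_transversals (insert c T) m ys)"
    if "c \<in> {a, b}" for c
    using Suc.IH[OF ys(1) xs(2)] Suc.prems(3) ys that unfolding \<sigma>_def by auto
  have sign_a: "(-1) ^ card (R \<inter> b_set (Suc m) xs) * f R = \<sigma> R"
    if "R \<in> pair_transversals (insert a T) m ys" for R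
  proof -
    have "b \<notin> R"
      using that ys unfolding pair_transversals_def by auto
    then show ?thesis
      by (simp add: xs(1) b_set_Cons \<sigma>_def)
  qed
  have sign_b: "(-1) ^ card (R \<inter> b_set (Suc m) xs) * f R = - \<sigma> R"
    if "R \<in> pair_transversals (insert b T) m ys" for R
  proof -
    have "R \<inter> b_set (Suc m) xs = insert b (R \<inter> b_set m ys)"
      using that unfolding xs(1) b_set_Cons pair_transversals_def by auto
    then show ?thesis
      using b_notin fin by (simp add: \<sigma>_def)
  qed
  have disjoint: "pair_transversals (insert a T) m ys \<inter> pair_transversals (insert b T) m ys = {}"
    using ys unfolding pair_transversals_def by auto
  have "cube_sum f T xs = sum \<sigma> (pair_transversals (insert a T) m ys)
      - sum \<sigma> (pair_transversals (insert b T) m ys)"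
    using IH xs(1) by simp
  also have "\<dots> = (\<Sum>R\<in>pair_transversals (insert a T) m ys. (-1) ^ card (R \<inter> b_set (Suc m) xs) * f R)
      + (\<Sum>R\<in>pair_transversals (insert b T) m ys. (-1) ^ card (R \<inter> b_set (Suc m) xs) * f R)"
    using sign_a sign_b by (simp add: sum_negf)
  also have "\<dots> = (\<Sum>R\<in>pair_transversals T (Suc m) xs. (-1) ^ card (R \<inter> b_set (Suc m) xs) * f R)"
    using Suc.prems(1,4) Suc.prems(3) disjoint
    by (simp add: xs(1) pair_transversals_Cons finite_pair_transversals sum.union_disjoint)
  finally show ?case .
qed

lemma cube_sum_cong:
  assumes "distinct xs" "length xs = 2 * m" "finite T" "T \<inter> set xs = {}"
    and "\<And>R. R \<in> pair_transversals T m xs \<Longrightarrow> f R = g R"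
  shows "cube_sum f T xs = cube_sum g T xs"
  using assms by (simp add: cube_sum_signed_sum)

text \<open>The multilinear polynomial \<open>\<Sum>\<^bsub>|S| < d\<^esub> h(S) \<Prod>\<^bsub>i \<in> S\<^esub> x\<^sub>i\<close>
  evaluated at the indicator vector of \<open>R\<close>.\<close>

definition subset_sum :: "nat \<Rightarrow> ('a set \<Rightarrow> real) \<Rightarrow> 'a set \<Rightarrow> real" where
  "subset_sum d h R = (\<Sum>S | S \<subseteq> R \<and> card S < d. h S)"

lemma subset_sum_0 [simp]: "subset_sum 0 h R = 0"
  by (simp add: subset_sum_def)

lemma subset_sum_diff: "subset_sum d (\<lambda>S. f S - g S) R = subset_sum d f R - subset_sum d g R"
  by (simp add: subset_sum_def sum_subtractf)

lemma subset_sum_add: "subset_sum d (\<lambda>S. f S + g S) R = subset_sum d f R + subset_sum d g R"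
  by (simp add: subset_sum_def sum.distrib)

lemma subset_sum_insert:
  assumes "finite X" "a \<notin> X"
  shows "subset_sum d h (insert a X) = subset_sum d h X + subset_sum (d - 1) (\<lambda>S. h (insert a S)) X"
proof -
  let ?A = "{S. S \<subseteq> X \<and> card S < d}" and ?B = "{S. S \<subseteq> X \<and> card S < d - 1}"
  have fin: "finite {S. S \<subseteq> X \<and> P S}" for P
    using assms(1) by (auto intro: finite_subset[of _ "Pow X"])
  have split: "{S. S \<subseteq> insert a X \<and> card S < d} = ?A \<union> insert a ` ?B"
  proof (intro set_eqI iffI)
    fix S assume S: "S \<in> {S. S \<subseteq> insert a X \<and> card S < d}"
    show "S \<in> ?A \<union> insert a ` ?B"
    proof (cases "a \<in> S")
      case True
      moreover have "finite S"
        using S assms(1) finite_subset[of S "insert a X"] by auto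
      ultimately have "S = insert a (S - {a})" "S - {a} \<in> ?B"
        using S card_gt_0_iff[of S] by (auto simp: card_Diff_singleton)
      then show ?thesis by blast
    qed (use S in auto)
  next
    fix S assume "S \<in> ?A \<union> insert a ` ?B"
    then show "S \<in> {S. S \<subseteq> insert a X \<and> card S < d}"
      using assms finite_subset[of _ X] by (auto simp: card_insert_if)
  qed
  have "inj_on (insert a) ?B"
    using assms(2) by (auto intro!: inj_onI simp: insert_ident)
  moreover have "?A \<inter> insert a ` ?B = {}"
    using assms(2) by auto
  ultimately show ?thesis
    unfolding subset_sum_def split by (simp add: fin sum.union_disjoint sum.reindex)
qed

lemma subset_sum_avoiding:
  assumes "finite R" "v \<in> R"
  shows "subset_sum d (\<lambda>S. if v \<in> S then 0 else h S) R = subset_sum d h (R - {v})"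
proof -
  have "subset_sum d (\<lambda>S. if v \<in> S then 0 else h S) (R - {v}) = subset_sum d h (R - {v})"
    unfolding subset_sum_def by (rule sum.cong) auto
  moreover have "R = insert v (R - {v})"
    using assms(2) by blast
  ultimately show ?thesis
    using assms(1) subset_sum_insert[of "R - {v}" v d] by (simp add: subset_sum_def)
qed

text \<open>Multiplying by \<open>1 - x\<^sub>v\<close> raises the degree by at most one.\<close>

lemma subset_sum_if_not_mem:
  "\<exists>h'. \<forall>R. finite R \<longrightarrow> (if v \<in> R then 0 else subset_sum d h R) = subset_sum (Suc d) h' R"
proof -
  define h' where "h' S = (if v \<in> S then - h (S - {v}) else if card S < d then h S else 0)" for S
  have avoid: "subset_sum (Suc d) h' R = subset_sum d h R" if "finite R" "v \<notin> R" for R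
  proof -
    have "subset_sum (Suc d) h' R = (\<Sum>S | S \<subseteq> R \<and> card S < Suc d. if card S < d then h S else 0)"
      unfolding subset_sum_def h'_def by (rule sum.cong) (use that(2) in auto)
    also have "\<dots> = sum h {S \<in> {S. S \<subseteq> R \<and> card S < Suc d}. card S < d}"
      by (rule sum.inter_filter[symmetric]) (use that(1) in \<open>auto intro: finite_subset[of _ "Pow R"]\<close>)
    also have "{S \<in> {S. S \<subseteq> R \<and> card S < Suc d}. card S < d} = {S. S \<subseteq> R \<and> card S < d}"
      by auto
    finally show ?thesis
      by (simp add: subset_sum_def)
  qed
  have "(if v \<in> R then 0 else subset_sum d h R) = subset_sum (Suc d) h' R" if "finite R" for R
  proof (cases "v \<in> R")
    case True
    have "subset_sum d (\<lambda>S. h' (insert v S)) (R - {v}) = subset_sum d (\<lambda>S. - h S) (R - {v})"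
      unfolding subset_sum_def h'_def by (rule sum.cong) (auto simp: subset_Diff_insert)
    moreover have "R = insert v (R - {v})"
      using True by blast
    ultimately show ?thesis
      using that subset_sum_insert[of "R - {v}" v "Suc d" h'] avoid[of "R - {v}"] True
      by (simp add: subset_sum_def sum_negf)
  qed (use avoid that in simp)
  then show ?thesis
    by blast
qed

lemma cube_sum_subset_sum:
  assumes "distinct xs" "length xs = 2 * m" "finite T" "T \<inter> set xs = {}" "d \<le> m"
  shows "cube_sum (subset_sum d h) T xs = 0"
  using assms
proof (induction m arbitrary: xs T d h)
  case 0
  then show ?case by simp
next
  case (Suc m)
  then obtain a b ys where xs: "xs = a # b # ys" "length ys = 2 * m"
    by (blast elim: length_double_SucE)
  have ys: "distinct ys" "T \<inter> set ys = {}"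
    using Suc.prems(1,4) xs(1) by auto
  let ?h' = "\<lambda>S. h (insert a S) - h (insert b S)"
  have "subset_sum d h (insert a R) - subset_sum d h (insert b R) = subset_sum (d - 1) ?h' R"
    if "R \<in> pair_transversals T m ys" for R
  proof -
    have "finite R" "a \<notin> R" "b \<notin> R"
      using that Suc.prems(1,3,4) xs(1) unfolding pair_transversals_def
      by (auto intro: finite_subset[of R "T \<union> set ys"])
    then show ?thesis
      by (simp add: subset_sum_insert subset_sum_diff)
  qed
  then have "cube_sum (\<lambda>R. subset_sum d h (insert a R) - subset_sum d h (insert b R)) T ys
      = cube_sum (subset_sum (d - 1) ?h') T ys"
    by (rule cube_sum_cong[OF ys(1) xs(2) Suc.prems(3) ys(2)])
  also have "\<dots> = 0"
    using Suc.IH[OF ys(1) xs(2) Suc.prems(3) ys(2)] Suc.prems(5) by simp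
  finally show ?case
    by (simp add: xs(1) cube_sum_insert_base cube_sum_diff)
qed

lemma subsets_card_pred_eq_image:
  assumes "finite R" "R \<noteq> {}"
  shows "{S. S \<subseteq> R \<and> card S = card R - 1} = (\<lambda>x. R - {x}) ` R"
proof (intro set_eqI iffI)
  fix S assume S: "S \<in> {S. S \<subseteq> R \<and> card S = card R - 1}"
  have "card R > 0"
    using assms by (simp add: card_gt_0_iff)
  then have "card (R - S) = 1"
    using S assms(1) card_Diff_subset[of S R] finite_subset[of S R] by auto
  then obtain x where "R - S = {x}"
    by (rule card_1_singletonE)
  then show "S \<in> (\<lambda>x. R - {x}) ` R"
    using S by blast
qed (use assms in auto)

text \<open>Each \<open>U \<subset> R\<close> lies in exactly \<open>k - |U|\<close> of the \<open>(k-1)\<close>-subsets of \<open>R\<close>.\<close>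

lemma subset_sum_eq_top_layer:
  assumes "finite R" "card R = k" "0 < k"
  shows "subset_sum k h R = (\<Sum>S | S \<subseteq> R \<and> card S = k - 1. \<Sum>U\<in>Pow S. h U / real (k - card U))"
proof -
  let ?c = "\<lambda>U. h U / real (k - card U)"
  have "R \<noteq> {}"
    using assms(2,3) by auto
  then have "{S. S \<subseteq> R \<and> card S = k - 1} = (\<lambda>x. R - {x}) ` R"
    using subsets_card_pred_eq_image[OF assms(1)] assms(2) by simp
  moreover have "inj_on (\<lambda>x. R - {x}) R"
    by (auto intro!: inj_onI)
  ultimately have "(\<Sum>S | S \<subseteq> R \<and> card S = k - 1. \<Sum>U\<in>Pow S. ?c U) = (\<Sum>x\<in>R. \<Sum>U\<in>Pow (R - {x}). ?c U)"
    by (simp add: sum.reindex)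
  also have "\<dots> = (\<Sum>x\<in>R. \<Sum>U\<in>Pow R. if x \<notin> U then ?c U else 0)"
  proof (rule sum.cong[OF refl])
    fix x
    have "Pow (R - {x}) = {U \<in> Pow R. x \<notin> U}"
      by auto
    then show "(\<Sum>U\<in>Pow (R - {x}). ?c U) = (\<Sum>U\<in>Pow R. if x \<notin> U then ?c U else 0)"
      using assms(1) by (simp only: sum.inter_filter finite_Pow_iff)
  qed
  also have "\<dots> = (\<Sum>U\<in>Pow R. \<Sum>x\<in>R. if x \<notin> U then ?c U else 0)"
    by (rule sum.swap)
  also have "\<dots> = (\<Sum>U\<in>Pow R. if card U < k then h U else 0)"
  proof (rule sum.cong[OF refl])
    fix U assume U: "U \<in> Pow R"
    have "(\<Sum>x\<in>R. if x \<notin> U then ?c U else 0) = real (card (R - U)) * ?c U"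
      using assms(1) by (simp add: sum.If_cases Collect_neg_eq Diff_eq)
    also have "card (R - U) = k - card U"
      using U assms by (simp add: card_Diff_subset finite_subset)
    finally show "(\<Sum>x\<in>R. if x \<notin> U then ?c U else 0) = (if card U < k then h U else 0)"
      by simp
  qed
  also have "\<dots> = subset_sum k h R"
    using assms(1) by (simp add: subset_sum_def sum.inter_filter[symmetric] Pow_def)
  finally show ?thesis ..
qed

lemma top_layer_eq_subset_sum:
  assumes "finite R" "0 < k"
  shows "(\<Sum>S | S \<subseteq> R \<and> card S = k - 1. h S) = subset_sum k (\<lambda>S. if card S = k - 1 then h S else 0) R"
proof -
  have "{S. S \<subseteq> R \<and> card S = k - 1} = {S \<in> {S. S \<subseteq> R \<and> card S < k}. card S = k - 1}"
    using assms(2) by auto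
  moreover have "finite {S. S \<subseteq> R \<and> card S < k}"
    using assms(1) by (simp add: finite_subset[of _ "Pow R"])
  ultimately show ?thesis
    unfolding subset_sum_def by (simp only: sum.inter_filter)
qed

definition cubes_vanish :: "'a set \<Rightarrow> nat \<Rightarrow> nat \<Rightarrow> ('a set \<Rightarrow> real) \<Rightarrow> bool" where
  "cubes_vanish V k j f \<longleftrightarrow> (\<forall>xs T. distinct xs \<longrightarrow> length xs = 2 * j \<longrightarrow> set xs \<subseteq> V \<longrightarrow>
     T \<subseteq> V \<longrightarrow> T \<inter> set xs = {} \<longrightarrow> card T + j = k \<longrightarrow> cube_sum f T xs = 0)"

definition degree_lt :: "'a set \<Rightarrow> nat \<Rightarrow> nat \<Rightarrow> ('a set \<Rightarrow> real) \<Rightarrow> bool" where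
  "degree_lt V k d f \<longleftrightarrow> (\<exists>h. \<forall>R. R \<subseteq> V \<longrightarrow> card R = k \<longrightarrow> f R = subset_sum d h R)"

lemma cubes_vanishI:
  assumes "\<And>xs T. distinct xs \<Longrightarrow> length xs = 2 * j \<Longrightarrow> set xs \<subseteq> V \<Longrightarrow> T \<subseteq> V \<Longrightarrow>
    T \<inter> set xs = {} \<Longrightarrow> card T + j = k \<Longrightarrow> cube_sum f T xs = 0"
  shows "cubes_vanish V k j f"
  using assms unfolding cubes_vanish_def by blast

lemma cubes_vanishD:
  "cubes_vanish V k j f \<Longrightarrow> distinct xs \<Longrightarrow> length xs = 2 * j \<Longrightarrow> set xs \<subseteq> V \<Longrightarrow> T \<subseteq> V \<Longrightarrow>
    T \<inter> set xs = {} \<Longrightarrow> card T + j = k \<Longrightarrow> cube_sum f T xs = 0"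
  unfolding cubes_vanish_def by blast

lemma cubes_vanish_if_degree_lt:
  assumes "finite V" "degree_lt V k j f"
  shows "cubes_vanish V k j f"
proof (rule cubes_vanishI)
  fix xs T
  assume xs: "distinct xs" "length xs = 2 * j" "set xs \<subseteq> V"
    and T: "T \<subseteq> V" "T \<inter> set xs = {}" "card T + j = k"
  obtain h where h: "\<And>R. R \<subseteq> V \<Longrightarrow> card R = k \<Longrightarrow> f R = subset_sum j h R"
    using assms(2) unfolding degree_lt_def by blast
  have fT: "finite T"
    using T(1) assms(1) finite_subset by blast
  have "cube_sum f T xs = cube_sum (subset_sum j h) T xs"
  proof (rule cube_sum_cong[OF xs(1,2) fT T(2)])
    fix R assume R: "R \<in> pair_transversals T j xs"
    then have "R \<subseteq> V"
      using T(1) xs(3) unfolding pair_transversals_def by blast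
    moreover have "card R = k"
      using card_pair_transversal[OF xs(1,2) fT T(2) R] T(3) by simp
    ultimately show "f R = subset_sum j h R"
      by (rule h)
  qed
  also have "\<dots> = 0"
    by (rule cube_sum_subset_sum[OF xs(1,2) fT T(2) order_refl])
  finally show "cube_sum f T xs = 0" .
qed

lemma cubes_vanish_diff_subset_sum:
  assumes "finite V" "cubes_vanish V k j f"
  shows "cubes_vanish V k j (\<lambda>R. f R - subset_sum j h R)"
proof (rule cubes_vanishI)
  fix xs T
  assume xs: "distinct xs" "length xs = 2 * j" "set xs \<subseteq> V"
    and T: "T \<subseteq> V" "T \<inter> set xs = {}" "card T + j = k"
  have "finite T"
    using T(1) assms(1) finite_subset by blast
  then show "cube_sum (\<lambda>R. f R - subset_sum j h R) T xs = 0"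
    using cubes_vanishD[OF assms(2) xs T] cube_sum_subset_sum[OF xs(1,2) _ T(2) order_refl]
    by (simp add: cube_sum_diff)
qed

lemma degree_lt_0_if_cubes_vanish:
  assumes "cubes_vanish V k 0 f"
  shows "degree_lt V k 0 f"
  using cubes_vanishD[OF assms, of "[]"] unfolding degree_lt_def by simp

lemma degree_lt_if_less:
  assumes "finite V" "k < j"
  shows "degree_lt V k j f"
  unfolding degree_lt_def
proof (intro exI allI impI)
  fix R assume R: "R \<subseteq> V" "card R = k"
  have fR: "finite R"
    using R(1) assms(1) finite_subset by blast
  have "subset_sum j (\<lambda>S. if card S = k then f S else 0) R
      = (\<Sum>S | S \<subseteq> R \<and> card S < j. if S = R then f S else 0)"
    unfolding subset_sum_def
    by (rule sum.cong) (use fR R(2) card_subset_eq[OF fR] in auto)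
  also have "\<dots> = f R"
    using fR R(2) assms(2) by (simp add: sum.delta finite_subset[of _ "Pow R"])
  finally show "f R = subset_sum j (\<lambda>S. if card S = k then f S else 0) R" ..
qed

lemma cubes_vanish_insert_base:
  assumes "finite V" "v \<notin> V" "0 < k" "cubes_vanish (insert v V) k j f"
  shows "cubes_vanish V (k - 1) j (\<lambda>X. f (insert v X))"
proof (rule cubes_vanishI)
  fix xs T
  assume xs: "distinct xs" "length xs = 2 * j" "set xs \<subseteq> V"
    and T: "T \<subseteq> V" "T \<inter> set xs = {}" "card T + j = k - 1"
  have "v \<notin> T" "v \<notin> set xs" "finite T"
    using assms(1,2) T(1) xs(3) finite_subset by auto
  then have "insert v T \<inter> set xs = {}" "card (insert v T) + j = k"
    using T(2,3) assms(3) by auto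
  moreover have "set xs \<subseteq> insert v V" "insert v T \<subseteq> insert v V"
    using xs(3) T(1) by auto
  ultimately have "cube_sum f (insert v T) xs = 0"
    by (intro cubes_vanishD[OF assms(4) xs(1,2)])
  then show "cube_sum (\<lambda>X. f (insert v X)) T xs = 0"
    by (simp add: cube_sum_insert_base)
qed

lemma cubes_vanish_remove:
  assumes "finite V" "v \<notin> V" "0 < j" "j \<le> k" "cubes_vanish (insert v V) k j g"
    and g_v: "\<And>R. R \<subseteq> insert v V \<Longrightarrow> card R = k \<Longrightarrow> v \<in> R \<Longrightarrow> g R = 0"
  shows "cubes_vanish V k (j - 1) g"
proof (rule cubes_vanishI)
  fix xs T
  assume xs: "distinct xs" "length xs = 2 * (j - 1)" "set xs \<subseteq> V"
    and T: "T \<subseteq> V" "T \<inter> set xs = {}" "card T + (j - 1) = k"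
  have fT: "finite T"
    using T(1) assms(1) finite_subset by blast
  obtain x where x: "x \<in> T"
    using T(3) assms(3,4) by fastforce
  define T0 where "T0 = T - {x}"
  have T0: "T = insert x T0" "x \<notin> T0" "card T0 + j = k"
    using x fT T(3) assms(3) card_gt_0_iff[of T] unfolding T0_def by (auto simp: card_Diff_singleton)
  have vx: "v \<notin> set xs" "v \<notin> T" "x \<notin> set xs" "x \<noteq> v"
    using assms(2) xs(3) T(1,2) x by auto
  have "cube_sum g T0 (x # v # xs) = 0"
  proof (rule cubes_vanishD[OF assms(5)])
    show "distinct (x # v # xs)" "length (x # v # xs) = 2 * j"
      using xs(1,2) vx assms(3) by auto
    show "set (x # v # xs) \<subseteq> insert v V" "T0 \<subseteq> insert v V"
      using xs(3) x T(1) unfolding T0_def by auto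
    show "T0 \<inter> set (x # v # xs) = {}" "card T0 + j = k"
      using T(2) vx T0(3) unfolding T0_def by auto
  qed
  moreover have "cube_sum g (insert v T0) xs = 0"
  proof -
    have disj: "insert v T0 \<inter> set xs = {}"
      using T(2) vx unfolding T0_def by auto
    have "g R = 0" if R: "R \<in> pair_transversals (insert v T0) (j - 1) xs" for R
    proof (rule g_v)
      show "R \<subseteq> insert v V" "v \<in> R"
        using R T(1) xs(3) unfolding pair_transversals_def T0_def by auto
      show "card R = k"
        using card_pair_transversal[OF xs(1,2) _ disj R] fT T0 vx assms(3)
        unfolding T0_def by simp
    qed
    then show ?thesis
      using fT disj by (simp add: cube_sum_signed_sum[OF xs(1,2)] T0_def)
  qed
  ultimately show "cube_sum g T xs = 0"
    by (simp add: T0(1))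
qed

lemma degree_lt_insert:
  assumes "finite V" "v \<notin> V" "0 < j" "j \<le> k" "cubes_vanish (insert v V) k j f"
    and link: "degree_lt V (k - 1) j (\<lambda>X. f (insert v X))"
    and lower: "\<And>g. cubes_vanish V k (j - 1) g \<Longrightarrow> degree_lt V k (j - 1) g"
  shows "degree_lt (insert v V) k j f"
proof -
  obtain h' where h': "\<And>T. T \<subseteq> V \<Longrightarrow> card T = k - 1 \<Longrightarrow> f (insert v T) = subset_sum j h' T"
    using link unfolding degree_lt_def by blast
  define h1 where "h1 S = (if v \<in> S then 0 else h' S)" for S
  define g where "g R = f R - subset_sum j h1 R" for R
  have g_v: "g R = 0" if R: "R \<subseteq> insert v V" "card R = k" "v \<in> R" for R
  proof -
    have fR: "finite R"
      using R(1) assms(1) finite_subset by blast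
    have "R - {v} \<subseteq> V" "card (R - {v}) = k - 1"
      using R fR by auto
    then have "f R = subset_sum j h' (R - {v})"
      using h' R(3) by (metis insert_Diff)
    then show ?thesis
      using subset_sum_avoiding[OF fR R(3)] unfolding g_def h1_def by simp
  qed
  have "cubes_vanish (insert v V) k j g"
    unfolding g_def by (rule cubes_vanish_diff_subset_sum) (use assms(1,5) in simp_all)
  then have "degree_lt V k (j - 1) g"
    using cubes_vanish_remove[OF assms(1-4)] g_v lower by blast
  then obtain h2 where h2: "\<And>R. R \<subseteq> V \<Longrightarrow> card R = k \<Longrightarrow> g R = subset_sum (j - 1) h2 R"
    unfolding degree_lt_def by blast
  obtain h3 where h3: "\<And>R. finite R \<Longrightarrow>
      (if v \<in> R then 0 else subset_sum (j - 1) h2 R) = subset_sum j h3 R"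
    using subset_sum_if_not_mem[of v "j - 1" h2] assms(3) by auto
  have "f R = subset_sum j (\<lambda>S. h1 S + h3 S) R" if R: "R \<subseteq> insert v V" "card R = k" for R
  proof -
    have "g R = subset_sum j h3 R"
      using g_v[OF R] h2[OF _ R(2)] h3[of R] R(1) assms(1) finite_subset
      by (cases "v \<in> R") (auto simp: subset_insert)
    then show ?thesis
      by (simp add: g_def subset_sum_add)
  qed
  then show ?thesis
    unfolding degree_lt_def by blast
qed

lemma degree_lt_if_cubes_vanish:
  assumes "finite V" "k + j \<le> card V" "cubes_vanish V k j f"
  shows "degree_lt V k j f"
  using assms
proof (induction V arbitrary: k j f rule: finite_induct)
  case empty
  then show ?case
    by (simp add: degree_lt_0_if_cubes_vanish)
next
  case (insert v V)
  consider "j = 0" | "k < j" | "0 < j" "j \<le> k"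
    by linarith
  then show ?case
  proof cases
    case 1
    then show ?thesis
      using insert.prems(2) by (simp add: degree_lt_0_if_cubes_vanish)
  next
    case 2
    then show ?thesis
      using insert.hyps(1) by (simp add: degree_lt_if_less)
  next
    case 3
    show ?thesis
    proof (rule degree_lt_insert[OF insert.hyps(1,2) 3 insert.prems(2)])
      show "degree_lt V (k - 1) j (\<lambda>X. f (insert v X))"
        using insert.IH cubes_vanish_insert_base[OF insert.hyps(1,2) _ insert.prems(2)]
          insert.prems(1) insert.hyps 3 by simp
      show "degree_lt V k (j - 1) g" if "cubes_vanish V k (j - 1) g" for g
        using insert.IH that insert.prems(1) insert.hyps 3 by simp
    qed
  qed
qed

theorem cubes_vanish_iff_degree_lt:
  assumes "finite V" "k + j \<le> card V"
  shows "cubes_vanish V k j f \<longleftrightarrow> degree_lt V k j f"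
  using assms cubes_vanish_if_degree_lt degree_lt_if_cubes_vanish by blast

lemma degree_lt_iff_top_layer:
  assumes "finite V" "0 < k"
  shows "degree_lt V k k f \<longleftrightarrow>
    (\<exists>h. \<forall>R. R \<subseteq> V \<and> card R = k \<longrightarrow> f R = (\<Sum>S\<in>{S. S \<subseteq> R \<and> card S = k - 1}. h S))"
proof
  assume "degree_lt V k k f"
  then obtain h where h: "\<And>R. R \<subseteq> V \<Longrightarrow> card R = k \<Longrightarrow> f R = subset_sum k h R"
    unfolding degree_lt_def by blast
  show "\<exists>h. \<forall>R. R \<subseteq> V \<and> card R = k \<longrightarrow> f R = (\<Sum>S\<in>{S. S \<subseteq> R \<and> card S = k - 1}. h S)"
  proof (intro exI allI impI)
    fix R assume R: "R \<subseteq> V \<and> card R = k"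
    then have "finite R"
      using assms(1) finite_subset by blast
    then show "f R = (\<Sum>S\<in>{S. S \<subseteq> R \<and> card S = k - 1}. \<Sum>U\<in>Pow S. h U / real (k - card U))"
      using h R subset_sum_eq_top_layer[OF _ _ assms(2), of R h] by simp
  qed
next
  assume "\<exists>h. \<forall>R. R \<subseteq> V \<and> card R = k \<longrightarrow> f R = (\<Sum>S\<in>{S. S \<subseteq> R \<and> card S = k - 1}. h S)"
  then obtain h where h: "\<And>R. R \<subseteq> V \<Longrightarrow> card R = k \<Longrightarrow> f R = (\<Sum>S | S \<subseteq> R \<and> card S = k - 1. h S)"
    by blast
  show "degree_lt V k k f"
    unfolding degree_lt_def
  proof (intro exI allI impI)
    fix R assume R: "R \<subseteq> V" "card R = k"
    then have "finite R"
      using assms(1) finite_subset by blast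
    then show "f R = subset_sum k (\<lambda>S. if card S = k - 1 then h S else 0) R"
      using h[OF R] top_layer_eq_subset_sum[OF _ assms(2)] by simp
  qed
qed

lemma finite_perms: "finite V \<Longrightarrow> finite (perms V s)"
  unfolding perms_def
  by (rule finite_subset[of _ "{xs. set xs \<subseteq> V \<and> length xs = s}"]) (auto intro: finite_lists_length_eq)

lemma level_weight_eq_0_iff:
  assumes "finite V"
  shows "level_weight V k r f = 0 \<longleftrightarrow> (\<forall>xs\<in>perms V (2 * r). inner_exp V k r f xs = 0)"
proof -
  have "level_weight V k r f = 0 \<longleftrightarrow>
      (\<Sum>xs\<in>perms V (2 * r). (inner_exp V k r f xs)\<^sup>2) = 0 \<or> perms V (2 * r) = {}"
    using finite_perms[OF assms] by (simp add: level_weight_def)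
  also have "\<dots> \<longleftrightarrow> (\<forall>xs\<in>perms V (2 * r). inner_exp V k r f xs = 0)"
    using finite_perms[OF assms] by (auto simp: sum_nonneg_eq_0_iff)
  finally show ?thesis .
qed

lemma inner_exp_eq_0_iff:
  "inner_exp V k r f xs = 0 \<longleftrightarrow>
     (\<Sum>R\<in>compat_sets V k r xs. (-1) ^ card (R \<inter> b_set r xs) * f R) = 0"
  unfolding inner_exp_def by (auto simp: card_eq_0_iff)

lemma compat_sets_eq_pair_transversals:
  assumes "finite V" "xs \<in> perms V (2 * k)"
  shows "compat_sets V k k xs = pair_transversals {} k xs"
proof (intro set_eqI iffI)
  have xs: "distinct xs" "length xs = 2 * k" "set xs \<subseteq> V"
    using assms(2) by (auto simp: perms_def)
  then have pair_in: "{xs ! (2*i), xs ! (2*i+1)} \<subseteq> set xs" if "i < k" for i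
    using that by auto
  {
    fix R assume R: "R \<in> compat_sets V k k xs"
    have "R \<inter> set xs \<in> pair_transversals {} k xs"
      using R pair_in unfolding compat_sets_def pair_transversals_def
      by (auto simp: Int_assoc Int_absorb2)
    then have "card (R \<inter> set xs) = card R"
      using card_pair_transversal[OF xs(1,2) finite.emptyI] R by (simp add: compat_sets_def)
    moreover have "finite R"
      using R assms(1) finite_subset unfolding compat_sets_def by blast
    ultimately have "R \<inter> set xs = R"
      using card_subset_eq[of R "R \<inter> set xs"] by blast
    then show "R \<in> pair_transversals {} k xs"
      using R unfolding compat_sets_def pair_transversals_def by auto
  next
    fix R assume R: "R \<in> pair_transversals {} k xs"
    then have "card R = k"
      using card_pair_transversal[OF xs(1,2) finite.emptyI] by simp
    then show "R \<in> compat_sets V k k xs"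
      using R xs(3) unfolding compat_sets_def pair_transversals_def by auto
  }
qed

lemma inner_exp_eq_0_iff_cube_sum:
  assumes "finite V" "xs \<in> perms V (2 * k)"
  shows "inner_exp V k k f xs = 0 \<longleftrightarrow> cube_sum f {} xs = 0"
proof -
  have "distinct xs" "length xs = 2 * k"
    using assms(2) by (auto simp: perms_def)
  then show ?thesis
    using cube_sum_signed_sum[of xs k "{}" f]
    by (simp add: inner_exp_eq_0_iff compat_sets_eq_pair_transversals[OF assms])
qed

lemma level_weight_eq_0_iff_cubes_vanish:
  assumes "finite V"
  shows "level_weight V k k f = 0 \<longleftrightarrow> cubes_vanish V k k f"
proof -
  have "T = {}" if "T \<subseteq> V" "card T + k = k" for T :: "'a set"
    using that finite_subset[OF that(1) assms] by simp
  then have "cubes_vanish V k k f \<longleftrightarrow> (\<forall>xs\<in>perms V (2 * k). cube_sum f {} xs = 0)"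
    unfolding cubes_vanish_def perms_def by auto
  then show ?thesis
    using assms by (simp add: level_weight_eq_0_iff inner_exp_eq_0_iff_cube_sum)
qed

theorem lemma2p7:
  fixes n k :: nat and f :: "nat set \<Rightarrow> real"
  assumes "k \<ge> 1" and "n \<ge> 2 * k"
  shows "level_weight {1..n} k k f = 0 \<longleftrightarrow>
    (\<exists>h :: nat set \<Rightarrow> real. \<forall>R. R \<subseteq> {1..n} \<and> card R = k \<longrightarrow>
        f R = (\<Sum>S\<in>{S. S \<subseteq> R \<and> card S = k - 1}. h S))"
proof -
  have V: "finite {1..n}" "k + k \<le> card {1..n}" "0 < k"
    using assms by auto
  show ?thesis
    unfolding level_weight_eq_0_iff_cubes_vanish[OF V(1)] cubes_vanish_iff_degree_lt[OF V(1,2)]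
      degree_lt_iff_top_layer[OF V(1,3)] ..
qed

end
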